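(* Let $K$ be a field, $n\ge 2$, $R=K[x_1,\dots,x_n]$, and let $\boldsymbol{\lambda}=(\lambda_1,\dots,\lambda_n)$ be a vector of positive integers. Put $\ell=\mathrm{lcm}(\lambda_1,\dots,\lambda_{n-1})$ and $\boldsymbol{\lambda}'=(\lambda_1,\dots,\lambda_{n-1},\lambda_n+\ell)$. If $I(\boldsymbol{\lambda}')$ is normal then $I(\boldsymbol{\lambda})$ is normal. If moreover $\lambda_n\ge \ell$ and $I(\boldsymbol{\lambda})$ is normal, then $I(\boldsymbol{\lambda}')$ is normal.
   Context: For a vector $\boldsymbol{\mu}=(\mu_1,\dots,\mu_n)$ of positive integers, $J(\boldsymbol{\mu})=(x_1^{\mu_1},\dots,x_n^{\mu_n})\subseteq R$ and $I(\boldsymbol{\mu})=\overline{J(\boldsymbol{\mu})}$ is its integral closure in $R$. An ideal $I$ of an integral domain is normal if $I^m$ is integrally closed for every positive integer $m$. *)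

theory Defs
  imports "HOL-Library.Poly_Mapping"
begin

(* The polynomial ring R = K[x_1,...,x_n] is realised as the subring polyR n of
polynomials only involving the variables x_0, ..., x_(n-1). *)

type_synonym 'a mpoly = "(nat \<Rightarrow>\<^sub>0 nat) \<Rightarrow>\<^sub>0 'a"

definition polyR :: "nat \<Rightarrow> 'a::comm_ring_1 mpoly set" where
  "polyR n = {p :: 'a mpoly. \<forall>m \<in> Poly_Mapping.keys p. Poly_Mapping.keys m \<subseteq> {..<n}}"

definition mvar :: "nat \<Rightarrow> 'a::comm_ring_1 mpoly" where
  "mvar i = Poly_Mapping.single (Poly_Mapping.single i 1) 1"

definition is_ideal :: "nat \<Rightarrow> 'a::comm_ring_1 mpoly set \<Rightarrow> bool" where
  "is_ideal n I \<longleftrightarrow> I \<subseteq> polyR n \<and> 0 \<in> I \<and> (\<forall>a\<in>I. \<forall>b\<in>I. a + b \<in> I)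
     \<and> (\<forall>r\<in>polyR n. \<forall>a\<in>I. r * a \<in> I)"

definition ideal_gen :: "nat \<Rightarrow> 'a::comm_ring_1 mpoly set \<Rightarrow> 'a mpoly set" where
  "ideal_gen n S = \<Inter>{I. is_ideal n I \<and> S \<subseteq> I}"

definition ideal_mult :: "nat \<Rightarrow> 'a::comm_ring_1 mpoly set \<Rightarrow> 'a mpoly set \<Rightarrow> 'a mpoly set" where
  "ideal_mult n I J = ideal_gen n {a * b | a b. a \<in> I \<and> b \<in> J}"

fun ideal_pow :: "nat \<Rightarrow> 'a::comm_ring_1 mpoly set \<Rightarrow> nat \<Rightarrow> 'a mpoly set" where
  "ideal_pow n I 0 = polyR n"
| "ideal_pow n I (Suc m) = ideal_mult n (ideal_pow n I m) I"

definition int_closure :: "nat \<Rightarrow> 'a::comm_ring_1 mpoly set \<Rightarrow> 'a mpoly set" where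
  "int_closure n I = {x \<in> polyR n. \<exists>k\<ge>1. \<exists>a::nat \<Rightarrow> 'a mpoly.
      (\<forall>i\<in>{1..k}. a i \<in> ideal_pow n I i) \<and> x ^ k + (\<Sum>i=1..k. a i * x ^ (k - i)) = 0}"

definition integrally_closed :: "nat \<Rightarrow> 'a::comm_ring_1 mpoly set \<Rightarrow> bool" where
  "integrally_closed n I \<longleftrightarrow> int_closure n I = I"

definition normal_ideal :: "nat \<Rightarrow> 'a::comm_ring_1 mpoly set \<Rightarrow> bool" where
  "normal_ideal n I \<longleftrightarrow> (\<forall>m\<ge>1. integrally_closed n (ideal_pow n I m))"

(* J(mu) = (x_1^mu_1, ..., x_n^mu_n) and I(mu) its integral closure
(variables indexed 0..n-1 here). *)
definition J_ideal :: "nat \<Rightarrow> (nat \<Rightarrow> nat) \<Rightarrow> 'a::comm_ring_1 mpoly set" where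
  "J_ideal n \<mu> = ideal_gen n {mvar i ^ \<mu> i | i. i < n}"

definition I_ideal :: "nat \<Rightarrow> (nat \<Rightarrow> nat) \<Rightarrow> 'a::comm_ring_1 mpoly set" where
  "I_ideal n \<mu> = int_closure n (J_ideal n \<mu>)"

end

(*
  Give the monomial x^a the weight F(a) = sum_i a_i / lambda_i.  The integral
  closure I(lambda) of J(lambda) contains x^a whenever F(a) >= 1 (a power of x^a lies in a
  power of J(lambda)), and a valuation argument shows that every monomial of an element of
  the integral closure of I(lambda)^m has weight >= m.  Hence I(lambda) is normal iff every
  exponent vector of weight >= m dominates a sum of m exponent vectors of weight >= 1.

  If the first n - 1
  coordinates of a fall short of weight m by d / l, then F(a) >= m iff d / l <= a_n / lambda_n,
  and by the mediant inequality this holds iff d / l <= (a_n + d) / (lambda_n + l), i.e. iff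
  the vector a with a_n raised by d has lambda'-weight >= m.  Raising or lowering the last
  coordinate of a and of the parts of a decomposition by these deficits transfers
  decompositions between lambda' and lambda.  From lambda to lambda' the last coordinate of a
  must first be lowered to the least admissible value ceil(lambda_n d / l); the hypothesis
  lambda_n >= l then keeps the sum of the deficits of the parts below d.
*)

theory Submission
  imports Defs Complex_Main
begin

abbreviation lookup :: "('a \<Rightarrow>\<^sub>0 'b::zero) \<Rightarrow> 'a \<Rightarrow> 'b" where
  "lookup \<equiv> Poly_Mapping.lookup"
abbreviation keys :: "('a \<Rightarrow>\<^sub>0 'b::zero) \<Rightarrow> 'a set" where
  "keys \<equiv> Poly_Mapping.keys"
abbreviation single :: "'a \<Rightarrow> 'b \<Rightarrow> 'a \<Rightarrow>\<^sub>0 'b::zero" where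
  "single \<equiv> Poly_Mapping.single"

section \<open>The polynomial ring and its ideals\<close>

lemma polyR_add: "p \<in> polyR n \<Longrightarrow> q \<in> polyR n \<Longrightarrow> p + q \<in> polyR n"
  unfolding polyR_def using keys_add[of p q] by blast

lemma polyR_mult:
  assumes "p \<in> polyR n" "q \<in> polyR n" shows "p * q \<in> polyR n"
  unfolding polyR_def
proof (intro CollectI ballI)
  fix m assume "m \<in> keys (p * q)"
  then obtain x y where "m = x + y" "x \<in> keys p" "y \<in> keys q" using keys_mult by blast
  then show "keys m \<subseteq> {..<n}" using assms keys_add[of x y] unfolding polyR_def by blast
qed

lemma polyR_0: "0 \<in> polyR n"
  unfolding polyR_def by simp

lemma polyR_1: "1 \<in> polyR n"
  unfolding polyR_def by simp

lemma polyR_single: "keys m \<subseteq> {..<n} \<Longrightarrow> single m c \<in> polyR n"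
  unfolding polyR_def by simp

lemma is_ideal_polyR: "is_ideal n (polyR n)"
  unfolding is_ideal_def by (blast intro: polyR_0 polyR_add polyR_mult)

lemma
  assumes "is_ideal n I"
  shows ideal_subset_polyR: "I \<subseteq> polyR n"
    and ideal_zero: "0 \<in> I"
    and ideal_add: "a \<in> I \<Longrightarrow> b \<in> I \<Longrightarrow> a + b \<in> I"
    and ideal_mult_left: "r \<in> polyR n \<Longrightarrow> a \<in> I \<Longrightarrow> r * a \<in> I"
    and ideal_mult_right: "r \<in> polyR n \<Longrightarrow> a \<in> I \<Longrightarrow> a * r \<in> I"
  using assms unfolding is_ideal_def by (auto simp: mult.commute)

lemma ideal_uminus: "is_ideal n I \<Longrightarrow> a \<in> I \<Longrightarrow> - a \<in> I"
  using ideal_mult_left[of n I "- 1" a] polyR_1[of n] by (simp add: polyR_def)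

lemma ideal_sum: "is_ideal n I \<Longrightarrow> (\<And>x. x \<in> A \<Longrightarrow> f x \<in> I) \<Longrightarrow> sum f A \<in> I"
  by (induction A rule: infinite_finite_induct) (auto simp: ideal_zero ideal_add)

lemma is_ideal_ideal_gen:
  assumes "S \<subseteq> polyR n" shows "is_ideal n (ideal_gen n S)"
  using assms is_ideal_polyR[of n]
  unfolding ideal_gen_def is_ideal_def by (simp add: Inf_less_eq) blast

lemma ideal_gen_superset: "S \<subseteq> ideal_gen n S"
  unfolding ideal_gen_def by blast

lemma ideal_gen_least: "is_ideal n T \<Longrightarrow> S \<subseteq> T \<Longrightarrow> ideal_gen n S \<subseteq> T"
  unfolding ideal_gen_def by blast

lemma ideal_gen_mult_right:
  assumes T: "is_ideal n T" and d: "d \<in> polyR n" and S: "S \<subseteq> polyR n"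
    and gen: "\<And>s. s \<in> S \<Longrightarrow> s * d \<in> T" and c: "c \<in> ideal_gen n S"
  shows "c * d \<in> T"
proof -
  let ?T = "{c \<in> polyR n. c * d \<in> T}"
  have "is_ideal n ?T"
    unfolding is_ideal_def
  proof (intro conjI ballI)
    show "0 \<in> ?T" using T by (simp add: polyR_0 ideal_zero)
    show "a + b \<in> ?T" if "a \<in> ?T" "b \<in> ?T" for a b
      using that T polyR_add[of a n b] ideal_add[of n T "a * d" "b * d"] by (simp add: distrib_right)
    show "r * a \<in> ?T" if "r \<in> polyR n" "a \<in> ?T" for r a
      using that T polyR_mult[of r n a] ideal_mult_left[of n T r "a * d"] by (simp add: mult.assoc)
  qed blast
  moreover have "S \<subseteq> ?T" using S gen by blast
  ultimately have "ideal_gen n S \<subseteq> ?T" by (rule ideal_gen_least)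
  with c show ?thesis by blast
qed

lemma ideal_mult_mem: "a \<in> I \<Longrightarrow> b \<in> J \<Longrightarrow> a * b \<in> ideal_mult n I J"
  unfolding ideal_mult_def by (rule subsetD[OF ideal_gen_superset]) blast

lemma is_ideal_ideal_mult:
  "I \<subseteq> polyR n \<Longrightarrow> J \<subseteq> polyR n \<Longrightarrow> is_ideal n (ideal_mult n I J)"
  unfolding ideal_mult_def by (rule is_ideal_ideal_gen) (blast intro: polyR_mult)

lemma is_ideal_ideal_pow:
  assumes "Q \<subseteq> polyR n" shows "is_ideal n (ideal_pow n Q k)"
proof (induction k)
  case (Suc k)
  show ?case using is_ideal_ideal_mult[OF ideal_subset_polyR[OF Suc.IH] assms] by simp
qed (simp add: is_ideal_polyR)

lemma ideal_pow_subset_polyR: "Q \<subseteq> polyR n \<Longrightarrow> ideal_pow n Q k \<subseteq> polyR n"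
  by (rule ideal_subset_polyR[OF is_ideal_ideal_pow])

lemma ideal_pow_Suc_mem: "p \<in> ideal_pow n Q k \<Longrightarrow> q \<in> Q \<Longrightarrow> p * q \<in> ideal_pow n Q (Suc k)"
  by (simp add: ideal_mult_mem)

lemma ideal_pow_one:
  assumes Q: "is_ideal n Q" shows "ideal_pow n Q 1 = Q"
proof
  have "{a * b |a b. a \<in> polyR n \<and> b \<in> Q} \<subseteq> Q"
    using ideal_mult_left[OF Q] by blast
  then show "ideal_pow n Q 1 \<subseteq> Q"
    unfolding One_nat_def ideal_pow.simps ideal_mult_def by (rule ideal_gen_least[OF Q])
  show "Q \<subseteq> ideal_pow n Q 1"
  proof
    fix q assume "q \<in> Q"
    then have "1 * q \<in> ideal_pow n Q (Suc 0)" by (intro ideal_pow_Suc_mem) (simp_all add: polyR_1)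
    then show "q \<in> ideal_pow n Q 1" by simp
  qed
qed

lemma ideal_pow_prod_lessThan:
  "(\<And>j. j < k \<Longrightarrow> f j \<in> Q) \<Longrightarrow> (\<Prod>j<k. f j) \<in> ideal_pow n Q k"
proof (induction k)
  case (Suc k)
  then show ?case using ideal_pow_Suc_mem[of "\<Prod>j<k. f j" n Q k "f k"] by simp
qed (simp add: polyR_1)

lemma ideal_pow_power: "q \<in> Q \<Longrightarrow> q ^ k \<in> ideal_pow n Q k"
  using ideal_pow_prod_lessThan[of k "\<lambda>_. q" Q n] by simp

lemma ideal_pow_Suc_subset:
  assumes Q: "Q \<subseteq> polyR n" shows "ideal_pow n Q (Suc k) \<subseteq> ideal_pow n Q k"
proof -
  have "{a * b |a b. a \<in> ideal_pow n Q k \<and> b \<in> Q} \<subseteq> ideal_pow n Q k"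
    using Q ideal_mult_right[OF is_ideal_ideal_pow[OF Q]] by blast
  then show ?thesis
    unfolding ideal_pow.simps ideal_mult_def by (rule ideal_gen_least[OF is_ideal_ideal_pow[OF Q]])
qed

lemma ideal_pow_antimono:
  assumes Q: "Q \<subseteq> polyR n" and "k \<le> k'" shows "ideal_pow n Q k' \<subseteq> ideal_pow n Q k"
  using assms(2)
proof (induction k' rule: dec_induct)
  case (step k')
  then show ?case using ideal_pow_Suc_subset[OF Q, of k'] by blast
qed simp

lemma ideal_pow_mult:
  assumes Q: "Q \<subseteq> polyR n" and p: "p \<in> ideal_pow n Q a"
  shows "q \<in> ideal_pow n Q b \<Longrightarrow> p * q \<in> ideal_pow n Q (a + b)"
proof (induction b arbitrary: q)
  case 0
  then show ?case using ideal_mult_right[OF is_ideal_ideal_pow[OF Q] _ p] by simp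
next
  case (Suc b)
  have "q * p \<in> ideal_pow n Q (a + Suc b)"
  proof (rule ideal_gen_mult_right[OF is_ideal_ideal_pow[OF Q]])
    show "p \<in> polyR n" using p ideal_pow_subset_polyR[OF Q] by blast
    show "{c * d |c d. c \<in> ideal_pow n Q b \<and> d \<in> Q} \<subseteq> polyR n"
      using ideal_pow_subset_polyR[OF Q, of b] Q polyR_mult by blast
    show "q \<in> ideal_gen n {c * d |c d. c \<in> ideal_pow n Q b \<and> d \<in> Q}"
      using Suc.prems by (simp add: ideal_mult_def)
    show "s * p \<in> ideal_pow n Q (a + Suc b)"
      if s: "s \<in> {c * d |c d. c \<in> ideal_pow n Q b \<and> d \<in> Q}" for s
    proof -
      obtain c d where s: "s = c * d" and c: "c \<in> ideal_pow n Q b" and d: "d \<in> Q" using s by blast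
      have "p * c * d \<in> ideal_pow n Q (Suc (a + b))"
        by (rule ideal_pow_Suc_mem[OF Suc.IH[OF c] d])
      then show ?thesis unfolding s by (simp add: ac_simps)
    qed
  qed
  then show ?case by (simp add: mult.commute)
qed

lemma ideal_pow_prod:
  assumes "Q \<subseteq> polyR n" "finite A" "\<And>i. i \<in> A \<Longrightarrow> f i \<in> ideal_pow n Q (e i)"
  shows "(\<Prod>i\<in>A. f i) \<in> ideal_pow n Q (\<Sum>i\<in>A. e i)"
  using assms(2,3)
proof (induction A rule: finite_induct)
  case (insert x F)
  then show ?case using ideal_pow_mult[OF assms(1)] by simp
qed (simp add: polyR_1)

lemma ideal_pow_add_subset:
  assumes Q: "Q \<subseteq> polyR n" and A: "A \<subseteq> polyR n" and QA: "ideal_pow n Q N \<subseteq> A"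
  shows "ideal_pow n Q (N + j) \<subseteq> ideal_mult n A (ideal_pow n Q j)"
proof (induction j)
  case 0
  show ?case using QA ideal_mult_mem[of _ A 1] polyR_1 by fastforce
next
  case (Suc j)
  let ?B = "\<lambda>j. ideal_mult n A (ideal_pow n Q j)"
  have B: "is_ideal n (?B (Suc j))"
    by (rule is_ideal_ideal_mult[OF A ideal_pow_subset_polyR[OF Q]])
  have step: "c * d \<in> ?B (Suc j)" if c: "c \<in> ideal_pow n Q (N + j)" and d: "d \<in> Q" for c d
  proof (rule ideal_gen_mult_right[OF B])
    show "d \<in> polyR n" using d Q by blast
    show "{e * f |e f. e \<in> A \<and> f \<in> ideal_pow n Q j} \<subseteq> polyR n"
      using A ideal_pow_subset_polyR[OF Q, of j] polyR_mult by blast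
    show "c \<in> ideal_gen n {e * f |e f. e \<in> A \<and> f \<in> ideal_pow n Q j}"
      using c Suc.IH unfolding ideal_mult_def by blast
    show "s * d \<in> ?B (Suc j)" if s: "s \<in> {e * f |e f. e \<in> A \<and> f \<in> ideal_pow n Q j}" for s
    proof -
      obtain e f where "s = e * f" "e \<in> A" "f \<in> ideal_pow n Q j" using s by blast
      then show ?thesis using ideal_mult_mem[OF _ ideal_pow_Suc_mem[OF _ d]] by (simp add: mult.assoc)
    qed
  qed
  have "{c * d |c d. c \<in> ideal_pow n Q (N + j) \<and> d \<in> Q} \<subseteq> ?B (Suc j)"
    using step by blast
  then have "ideal_mult n (ideal_pow n Q (N + j)) Q \<subseteq> ?B (Suc j)"
    unfolding ideal_mult_def[of n "ideal_pow n Q (N + j)"] by (rule ideal_gen_least[OF B])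
  then show ?case by simp
qed

lemma ideal_pow_mult_subset_pow_pow:
  assumes Q: "Q \<subseteq> polyR n"
  shows "ideal_pow n Q (m * k) \<subseteq> ideal_pow n (ideal_pow n Q m) k"
proof (induction k)
  case (Suc k)
  have "ideal_pow n Q (m * k + m) \<subseteq> ideal_mult n (ideal_pow n (ideal_pow n Q m) k) (ideal_pow n Q m)"
    by (rule ideal_pow_add_subset[OF Q ideal_pow_subset_polyR[OF ideal_pow_subset_polyR[OF Q]] Suc.IH])
  then show ?case by (simp add: add.commute)
qed simp

lemma int_closureI_power:
  assumes Q: "Q \<subseteq> polyR n" and y: "y \<in> polyR n" and K: "K \<ge> 1"
    and yK: "y ^ K \<in> ideal_pow n Q K"
  shows "y \<in> int_closure n Q"
proof -
  define a where "a i = (if i = K then - (y ^ K) else 0)" for i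
  have "\<forall>i\<in>{1..K}. a i \<in> ideal_pow n Q i"
    using ideal_uminus[OF is_ideal_ideal_pow[OF Q] yK] ideal_zero[OF is_ideal_ideal_pow[OF Q]]
    by (simp add: a_def)
  moreover have "(\<Sum>i=1..K. a i * y ^ (K - i)) = (\<Sum>i\<in>{1..K}. if i = K then - (y ^ K) else 0)"
    by (rule sum.cong) (auto simp: a_def)
  ultimately have "(\<forall>i\<in>{1..K}. a i \<in> ideal_pow n Q i) \<and> y ^ K + (\<Sum>i=1..K. a i * y ^ (K - i)) = 0"
    using K by simp
  then show ?thesis
    unfolding int_closure_def using y K by blast
qed

lemma ideal_subset_int_closure:
  assumes Q: "Q \<subseteq> polyR n" shows "Q \<subseteq> int_closure n Q"
proof
  fix y assume y: "y \<in> Q"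
  have "1 * y \<in> ideal_pow n Q (Suc 0)"
    by (rule ideal_pow_Suc_mem) (simp_all add: polyR_1 y)
  then show "y \<in> int_closure n Q"
    using Q y by (intro int_closureI_power[of Q n y 1]) auto
qed

section \<open>Monomials and monomial ideals\<close>

lemma mvar_power: "(mvar i :: 'a::comm_ring_1 mpoly) ^ k = single (single i k) 1"
  by (induction k) (simp_all add: mvar_def mult_single single_add[symmetric])

lemma prod_single_one:
  "finite A \<Longrightarrow> (\<Prod>i\<in>A. single (e i) (1::'a::comm_ring_1)) = single (\<Sum>i\<in>A. e i) 1"
  by (induction A rule: finite_induct) (simp_all add: mult_single)

lemma mvar_power_in_polyR: "i < n \<Longrightarrow> mvar i ^ k \<in> polyR n"
  unfolding mvar_power by (rule polyR_single) simp

lemma mpoly_eq_sum_terms: "p = (\<Sum>t\<in>keys p. single t (lookup p t))"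
proof (rule poly_mapping_eqI)
  fix z
  have "lookup (\<Sum>t\<in>keys p. single t (lookup p t)) z = (\<Sum>t\<in>keys p. if t = z then lookup p t else 0)"
    unfolding lookup_sum by (rule sum.cong) (auto simp: lookup_single when_def)
  then show "lookup p z = lookup (\<Sum>t\<in>keys p. single t (lookup p t)) z"
    by (simp add: in_keys_iff)
qed

definition monomial_ideal :: "nat \<Rightarrow> (nat \<Rightarrow>\<^sub>0 nat) set \<Rightarrow> 'a::comm_ring_1 mpoly set" where
  "monomial_ideal n U = {p \<in> polyR n. keys p \<subseteq> U}"

lemma monomial_ideal_mult:
  assumes UV: "\<And>x y. x \<in> U \<Longrightarrow> y \<in> V \<Longrightarrow> x + y \<in> Z"
    and p: "p \<in> monomial_ideal n U" and q: "q \<in> monomial_ideal n V"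
  shows "p * q \<in> monomial_ideal n Z"
proof -
  have "p * q \<in> polyR n" using p q polyR_mult unfolding monomial_ideal_def by blast
  moreover have "keys (p * q) \<subseteq> Z"
  proof
    fix z assume "z \<in> keys (p * q)"
    then obtain x y where "z = x + y" "x \<in> keys p" "y \<in> keys q" using keys_mult by blast
    then show "z \<in> Z" using p q UV unfolding monomial_ideal_def by blast
  qed
  ultimately show ?thesis unfolding monomial_ideal_def by blast
qed

lemma is_ideal_monomial_ideal:
  assumes up: "\<And>x y. x \<in> U \<Longrightarrow> x + y \<in> U"
  shows "is_ideal n (monomial_ideal n U)"
  unfolding is_ideal_def
proof (intro conjI ballI)
  show "monomial_ideal n U \<subseteq> polyR n" "0 \<in> monomial_ideal n U"
    unfolding monomial_ideal_def by (auto simp: polyR_0)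
  show "a + b \<in> monomial_ideal n U" if "a \<in> monomial_ideal n U" "b \<in> monomial_ideal n U" for a b
    using that polyR_add keys_add[of a b] unfolding monomial_ideal_def by blast
  show "r * a \<in> monomial_ideal n U" if "r \<in> polyR n" "a \<in> monomial_ideal n U" for r a
  proof (rule monomial_ideal_mult[OF _ _ that(2)])
    show "r \<in> monomial_ideal n UNIV" using that(1) by (simp add: monomial_ideal_def)
    show "x + y \<in> U" if "y \<in> U" for x y using up[OF that, of x] by (simp add: add.commute)
  qed
qed

lemma ideal_pow_subset_monomial_ideal:
  assumes Q: "Q \<subseteq> monomial_ideal n U"
    and up: "\<And>j x y. x \<in> V j \<Longrightarrow> x + y \<in> V j"
    and V0: "V 0 = UNIV"
    and VSuc: "\<And>j x y. x \<in> V j \<Longrightarrow> y \<in> U \<Longrightarrow> x + y \<in> V (Suc j)"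
  shows "ideal_pow n Q j \<subseteq> monomial_ideal n (V j)"
proof (induction j)
  case 0
  show ?case using V0 by (simp add: monomial_ideal_def)
next
  case (Suc j)
  have prods: "{a * b |a b. a \<in> ideal_pow n Q j \<and> b \<in> Q} \<subseteq> monomial_ideal n (V (Suc j))"
    using Suc.IH Q monomial_ideal_mult[of "V j" U "V (Suc j)"] VSuc by blast
  have "is_ideal n (monomial_ideal n (V (Suc j)))"
    by (rule is_ideal_monomial_ideal) (rule up)
  then show ?case
    unfolding ideal_pow.simps ideal_mult_def by (rule ideal_gen_least[OF _ prods])
qed

lemma ideal_mem_if_terms_mem:
  assumes "is_ideal n Q" "\<And>t. t \<in> keys p \<Longrightarrow> single t (lookup p t) \<in> Q"
  shows "p \<in> Q"
proof -
  have "(\<Sum>t\<in>keys p. single t (lookup p t)) \<in> Q"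
    by (rule ideal_sum[OF assms(1)]) (rule assms(2))
  then show ?thesis by (subst mpoly_eq_sum_terms)
qed

section \<open>Weighted orders of polynomials\<close>

definition weight_ge :: "((nat \<Rightarrow>\<^sub>0 nat) \<Rightarrow> real) \<Rightarrow> 'a::zero mpoly \<Rightarrow> real \<Rightarrow> bool" where
  "weight_ge w p r \<longleftrightarrow> (\<forall>x\<in>keys p. r \<le> w x)"

definition weight_gt :: "((nat \<Rightarrow>\<^sub>0 nat) \<Rightarrow> real) \<Rightarrow> 'a::zero mpoly \<Rightarrow> real \<Rightarrow> bool" where
  "weight_gt w p r \<longleftrightarrow> (\<forall>x\<in>keys p. r < w x)"

definition weight_homogeneous :: "((nat \<Rightarrow>\<^sub>0 nat) \<Rightarrow> real) \<Rightarrow> 'a::zero mpoly \<Rightarrow> real \<Rightarrow> bool" where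
  "weight_homogeneous w p r \<longleftrightarrow> (\<forall>x\<in>keys p. w x = r)"

lemma weight_gt_imp_ge: "weight_gt w p r \<Longrightarrow> weight_ge w p r"
  unfolding weight_gt_def weight_ge_def by (simp add: less_imp_le)

lemma weight_homogeneous_imp_ge: "weight_homogeneous w p r \<Longrightarrow> weight_ge w p r"
  unfolding weight_homogeneous_def weight_ge_def by simp

lemma weight_ge_imp_gt: "weight_ge w p r \<Longrightarrow> s < r \<Longrightarrow> weight_gt w p s"
  unfolding weight_gt_def weight_ge_def by fastforce

lemma weight_gt_add: "weight_gt w p r \<Longrightarrow> weight_gt w q r \<Longrightarrow> weight_gt w (p + q) r"
  unfolding weight_gt_def using keys_add[of p q] by blast

lemma weight_gt_sum: "(\<And>i. i \<in> A \<Longrightarrow> weight_gt w (f i) r) \<Longrightarrow> weight_gt w (sum f A) r"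
  unfolding weight_gt_def using keys_sum[of f A] by blast

lemma weight_homogeneous_add_gt_nonzero:
  assumes "h \<noteq> 0" "weight_homogeneous w h r" "weight_gt w g r"
  shows "h + g \<noteq> 0"
proof -
  obtain y where y: "y \<in> keys h" using assms(1) by fastforce
  then have "y \<notin> keys g" using assms(2,3) unfolding weight_homogeneous_def weight_gt_def by fastforce
  then have "lookup (h + g) y = lookup h y" by (simp add: lookup_add in_keys_iff)
  then show ?thesis using y by (auto simp: in_keys_iff)
qed

lemma initial_form_decomposition:
  fixes f :: "'a::comm_ring_1 mpoly"
  assumes x0: "x0 \<in> keys f"
  obtains h g v where "f = h + g" "h \<noteq> 0" "weight_homogeneous w h v" "weight_gt w g v"
    "weight_ge w f v" "v \<le> w x0"
proof -
  define v where "v = Min (w ` keys f)"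
  have v_le: "v \<le> w x" if "x \<in> keys f" for x
    unfolding v_def using that by simp
  have "v \<in> w ` keys f"
    unfolding v_def using x0 by (intro Min_in) auto
  then obtain xm where xm: "xm \<in> keys f" "w xm = v" by blast
  define h where "h = (\<Sum>x\<in>{x\<in>keys f. w x = v}. single x (lookup f x))"
  have lookup_h: "lookup h y = (if y \<in> keys f \<and> w y = v then lookup f y else 0)" for y
    unfolding h_def lookup_sum by (simp add: lookup_single when_def)
  show ?thesis
  proof (rule that)
    show "f = h + (f - h)" by simp
    show "h \<noteq> 0" using lookup_h[of xm] xm by (auto simp: in_keys_iff)
    show "weight_homogeneous w h v"
      unfolding weight_homogeneous_def using lookup_h by (auto simp: in_keys_iff split: if_splits)
    show "weight_gt w (f - h) v"
      unfolding weight_gt_def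
    proof
      fix y assume "y \<in> keys (f - h)"
      then have "lookup f y \<noteq> lookup h y" by (simp add: in_keys_iff lookup_minus)
      then have "y \<in> keys f" "w y \<noteq> v" using lookup_h[of y] by (auto simp: in_keys_iff split: if_splits)
      then show "v < w y" using v_le[of y] by simp
    qed
    show "weight_ge w f v" "v \<le> w x0"
      unfolding weight_ge_def using v_le x0 by auto
  qed
qed

context
  fixes w :: "(nat \<Rightarrow>\<^sub>0 nat) \<Rightarrow> real"
  assumes w_add: "\<And>x y. w (x + y) = w x + w y"
begin

lemma weight_zero: "w 0 = 0"
  using w_add[of 0 0] by simp

lemma weight_ge_mult:
  fixes p q :: "'a::comm_ring_1 mpoly"
  assumes "weight_ge w p r" "weight_ge w q s" shows "weight_ge w (p * q) (r + s)"
  unfolding weight_ge_def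
proof
  fix z assume "z \<in> keys (p * q)"
  then obtain x y where "z = x + y" "x \<in> keys p" "y \<in> keys q" using keys_mult by blast
  then show "r + s \<le> w z" using assms w_add unfolding weight_ge_def by (simp add: add_mono)
qed

lemma weight_gt_mult_left:
  fixes p q :: "'a::comm_ring_1 mpoly"
  assumes "weight_gt w p r" "weight_ge w q s" shows "weight_gt w (p * q) (r + s)"
  unfolding weight_gt_def
proof
  fix z assume "z \<in> keys (p * q)"
  then obtain x y where "z = x + y" "x \<in> keys p" "y \<in> keys q" using keys_mult by blast
  then show "r + s < w z"
    using assms w_add unfolding weight_ge_def weight_gt_def by (simp add: add_less_le_mono)
qed

lemma weight_gt_mult_right:
  fixes p q :: "'a::comm_ring_1 mpoly"
  shows "weight_ge w p r \<Longrightarrow> weight_gt w q s \<Longrightarrow> weight_gt w (p * q) (r + s)"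
  using weight_gt_mult_left[of q s p r] by (simp add: mult.commute add.commute)

lemma weight_homogeneous_mult:
  fixes p q :: "'a::comm_ring_1 mpoly"
  assumes "weight_homogeneous w p r" "weight_homogeneous w q s"
  shows "weight_homogeneous w (p * q) (r + s)"
  unfolding weight_homogeneous_def
proof
  fix z assume "z \<in> keys (p * q)"
  then obtain x y where "z = x + y" "x \<in> keys p" "y \<in> keys q" using keys_mult by blast
  then show "w z = r + s" using assms w_add unfolding weight_homogeneous_def by simp
qed

lemma weight_homogeneous_power:
  fixes p :: "'a::comm_ring_1 mpoly"
  assumes "weight_homogeneous w p r" shows "weight_homogeneous w (p ^ j) (real j * r)"
proof (induction j)
  case (Suc j)
  then show ?case
    using weight_homogeneous_mult[OF assms Suc.IH] by (simp add: algebra_simps)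
qed (simp add: weight_homogeneous_def weight_zero)

lemma weight_ge_power:
  fixes p :: "'a::comm_ring_1 mpoly"
  assumes "weight_ge w p r" shows "weight_ge w (p ^ j) (real j * r)"
proof (induction j)
  case (Suc j)
  then show ?case
    using weight_ge_mult[OF assms Suc.IH] by (simp add: algebra_simps)
qed (simp add: weight_ge_def weight_zero)

lemma power_initial_form:
  fixes h g :: "'a::comm_ring_1 mpoly"
  assumes h: "weight_homogeneous w h v" and g: "weight_gt w g v"
  shows "\<exists>R. (h + g) ^ j = h ^ j + R \<and> weight_gt w R (real j * v)"
proof (induction j)
  case 0
  show ?case by (intro exI[of _ 0]) (simp add: weight_gt_def)
next
  case (Suc j)
  then obtain R where R: "(h + g) ^ j = h ^ j + R" "weight_gt w R (real j * v)" by blast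
  have "(h + g) ^ Suc j = h ^ Suc j + (h * R + g * h ^ j + g * R)"
    unfolding power_Suc R(1) by (simp add: algebra_simps)
  moreover have "weight_gt w (h * R + g * h ^ j + g * R) (v + real j * v)"
    using weight_gt_mult_right[OF weight_homogeneous_imp_ge[OF h] R(2)]
      weight_gt_mult_left[OF g weight_homogeneous_imp_ge[OF weight_homogeneous_power[OF h]]]
      weight_gt_mult_left[OF g weight_gt_imp_ge[OF R(2)]]
    by (intro weight_gt_add)
  ultimately show ?case by (auto simp: algebra_simps)
qed

text \<open>The terms of minimal weight of \<open>f\<close> would have to cancel in the integral equation.\<close>

lemma weight_ge_if_integral:
  fixes f :: "'a::idom mpoly"
  assumes k: "k \<ge> 1" and a: "\<forall>i\<in>{1..k}. weight_ge w (a i) (real i * c)"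
    and eq: "f ^ k + (\<Sum>i=1..k. a i * f ^ (k - i)) = 0"
  shows "weight_ge w f c"
proof (rule ccontr)
  assume "\<not> weight_ge w f c"
  then obtain x0 where x0: "x0 \<in> keys f" "w x0 < c" unfolding weight_ge_def by auto
  obtain h g v where f: "f = h + g" and h: "h \<noteq> 0" "weight_homogeneous w h v"
    and g: "weight_gt w g v" and f_ge: "weight_ge w f v" and "v \<le> w x0"
    by (rule initial_form_decomposition[OF x0(1)])
  with x0 have vc: "v < c" by simp
  obtain R where R: "f ^ k = h ^ k + R" "weight_gt w R (real k * v)"
    using power_initial_form[OF h(2) g] f by blast
  have "weight_gt w (a i * f ^ (k - i)) (real k * v)" if i: "i \<in> {1..k}" for i
  proof (rule weight_ge_imp_gt)
    show "weight_ge w (a i * f ^ (k - i)) (real i * c + real (k - i) * v)"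
      using weight_ge_mult[OF a[rule_format, OF i] weight_ge_power[OF f_ge]] .
    show "real k * v < real i * c + real (k - i) * v"
      using i vc by (simp add: of_nat_diff algebra_simps)
  qed
  then have "weight_gt w (R + (\<Sum>i=1..k. a i * f ^ (k - i))) (real k * v)"
    using R(2) by (intro weight_gt_add weight_gt_sum)
  moreover have "h ^ k \<noteq> 0" using h(1) by simp
  ultimately have "h ^ k + (R + (\<Sum>i=1..k. a i * f ^ (k - i))) \<noteq> 0"
    using weight_homogeneous_add_gt_nonzero weight_homogeneous_power[OF h(2)] by blast
  then show False using eq R(1) by (simp add: add.assoc)
qed

end

lemma monomial_ideal_weight_iff:
  fixes w :: "(nat \<Rightarrow>\<^sub>0 nat) \<Rightarrow> real"
  shows "p \<in> monomial_ideal n {x. r \<le> w x} \<longleftrightarrow> p \<in> polyR n \<and> weight_ge w p r"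
  unfolding monomial_ideal_def weight_ge_def by blast

lemma ideal_pow_subset_weight:
  fixes w :: "(nat \<Rightarrow>\<^sub>0 nat) \<Rightarrow> real"
  assumes w_add: "\<And>x y. w (x + y) = w x + w y" and w_nonneg: "\<And>x. 0 \<le> w x"
    and Q: "Q \<subseteq> monomial_ideal n {x. r \<le> w x}" and r: "0 \<le> r"
  shows "ideal_pow n Q j \<subseteq> monomial_ideal n {x. real j * r \<le> w x}"
proof (rule ideal_pow_subset_monomial_ideal[OF Q])
  show "x + y \<in> {x. real j * r \<le> w x}" if "x \<in> {x. real j * r \<le> w x}" for j x y
    using that w_nonneg[of y] by (simp add: w_add)
  show "{x. real 0 * r \<le> w x} = UNIV" using w_nonneg by simp
  show "x + y \<in> {x. real (Suc j) * r \<le> w x}"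
    if "x \<in> {x. real j * r \<le> w x}" "y \<in> {x. r \<le> w x}" for j x y
    using that by (simp add: w_add algebra_simps)
qed

lemma int_closure_subset_weight:
  fixes Q :: "'a::idom mpoly set" and w :: "(nat \<Rightarrow>\<^sub>0 nat) \<Rightarrow> real"
  assumes w_add: "\<And>x y. w (x + y) = w x + w y" and w_nonneg: "\<And>x. 0 \<le> w x"
    and Q: "Q \<subseteq> monomial_ideal n {x. r \<le> w x}" and r: "0 \<le> r"
  shows "int_closure n Q \<subseteq> monomial_ideal n {x. r \<le> w x}"
proof
  fix x assume "x \<in> int_closure n Q"
  then obtain k a where x: "x \<in> polyR n" and k: "k \<ge> 1"
    and a: "\<forall>i\<in>{1..k}. a i \<in> ideal_pow n Q i"
    and eq: "x ^ k + (\<Sum>i=1..k. a i * x ^ (k - i)) = 0"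
    unfolding int_closure_def by blast
  have "\<forall>i\<in>{1..k}. weight_ge w (a i) (real i * r)"
  proof
    fix i assume "i \<in> {1..k}"
    then have "a i \<in> monomial_ideal n {x. real i * r \<le> w x}"
      using a ideal_pow_subset_weight[OF w_add w_nonneg Q r, of i] by blast
    then show "weight_ge w (a i) (real i * r)" by (simp add: monomial_ideal_weight_iff)
  qed
  then have "weight_ge w x r" by (rule weight_ge_if_integral[OF w_add k _ eq])
  with x show "x \<in> monomial_ideal n {x. r \<le> w x}" by (simp add: monomial_ideal_weight_iff)
qed

section \<open>The ideals \<open>I(\<lambda>)\<close> as monomial ideals\<close>

definition lam_weight :: "(nat \<Rightarrow> nat) \<Rightarrow> nat \<Rightarrow> (nat \<Rightarrow>\<^sub>0 nat) \<Rightarrow> real" where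
  "lam_weight lam n a = (\<Sum>i<n. real (lookup a i) / real (lam i))"

lemma lam_weight_add: "lam_weight lam n (x + y) = lam_weight lam n x + lam_weight lam n y"
  unfolding lam_weight_def by (simp add: lookup_add add_divide_distrib sum.distrib)

lemma lam_weight_nonneg: "0 \<le> lam_weight lam n x"
  unfolding lam_weight_def by (simp add: sum_nonneg)

lemma lam_weight_single:
  assumes "i < n" shows "lam_weight lam n (single i k) = real k / real (lam i)"
proof -
  have "lam_weight lam n (single i k) = (\<Sum>j<n. if j = i then real k / real (lam i) else 0)"
    unfolding lam_weight_def by (rule sum.cong) (auto simp: lookup_single)
  then show ?thesis using assms by simp
qed

lemma is_ideal_J_ideal: "is_ideal n (J_ideal n lam)"
  unfolding J_ideal_def by (rule is_ideal_ideal_gen) (auto intro: mvar_power_in_polyR)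

lemma mvar_power_in_J_ideal: "i < n \<Longrightarrow> mvar i ^ lam i \<in> J_ideal n lam"
  unfolding J_ideal_def by (rule subsetD[OF ideal_gen_superset]) blast

lemma J_ideal_subset_I_ideal: "J_ideal n lam \<subseteq> I_ideal n lam"
  unfolding I_ideal_def by (rule ideal_subset_int_closure[OF ideal_subset_polyR[OF is_ideal_J_ideal]])

lemma I_ideal_subset_polyR: "I_ideal n lam \<subseteq> polyR n"
  unfolding I_ideal_def int_closure_def by blast

lemma I_ideal_subset_weight:
  assumes pos: "\<forall>i<n. lam i > 0"
  shows "(I_ideal n lam :: 'a::idom mpoly set) \<subseteq> monomial_ideal n {x. 1 \<le> lam_weight lam n x}"
proof -
  have "{mvar i ^ lam i |i. i < n} \<subseteq> (monomial_ideal n {x. 1 \<le> lam_weight lam n x} :: 'a mpoly set)"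
    using pos mvar_power_in_polyR by (auto simp: mvar_power monomial_ideal_def lam_weight_single)
  moreover have "is_ideal n (monomial_ideal n {x. 1 \<le> lam_weight lam n x} :: 'a mpoly set)"
    by (rule is_ideal_monomial_ideal) (simp add: lam_weight_add add_increasing2 lam_weight_nonneg)
  ultimately have "(J_ideal n lam :: 'a mpoly set) \<subseteq> monomial_ideal n {x. 1 \<le> lam_weight lam n x}"
    unfolding J_ideal_def by (intro ideal_gen_least)
  then show ?thesis
    unfolding I_ideal_def by (rule int_closure_subset_weight[OF lam_weight_add lam_weight_nonneg _ zero_le_one])
qed

lemma single_power_eq_prod_mvar_power:
  assumes dvd: "\<And>i. i < n \<Longrightarrow> lam i dvd L" and b: "keys b \<subseteq> {..<n}"
  shows "single b (1::'a::comm_ring_1) ^ L = (\<Prod>i<n. (mvar i ^ lam i) ^ (lookup b i * (L div lam i)))"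
proof -
  define c where "c i = lookup b i * (L div lam i)" for i
  have exponent: "(\<Sum>j<L. b) = (\<Sum>i<n. single i (lam i * c i))"
  proof (rule poly_mapping_eqI)
    fix z
    have "L * lookup b z = (if z < n then lam z * c z else 0)"
    proof (cases "z < n")
      case True
      then show ?thesis using dvd[OF True] by (simp add: c_def)
    next
      case False
      then have "z \<notin> keys b" using b by auto
      then show ?thesis using False by (simp add: in_keys_iff)
    qed
    then show "lookup (\<Sum>j<L. b) z = lookup (\<Sum>i<n. single i (lam i * c i)) z"
      by (simp only: lookup_sum) (auto simp: lookup_single when_def)
  qed
  have "single b (1::'a) ^ L = single (\<Sum>j<L. b) 1"
    using prod_single_one[of "{..<L}" "\<lambda>_. b"] by simp
  also have "\<dots> = (\<Prod>i<n. single (single i (lam i * c i)) 1)"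
    unfolding exponent by (simp add: prod_single_one)
  also have "\<dots> = (\<Prod>i<n. (mvar i ^ lam i) ^ c i)"
    by (simp only: power_mult[symmetric]) (simp only: mvar_power)
  finally show ?thesis unfolding c_def .
qed

lemma single_power_in_ideal_pow:
  assumes pos: "\<forall>i<n. lam i > 0" and b: "keys b \<subseteq> {..<n}" and Q: "Q \<subseteq> polyR n"
    and gens: "\<And>i. i < n \<Longrightarrow> mvar i ^ lam i \<in> Q" and weight: "real m \<le> lam_weight lam n b"
  shows "single b (1::'a::comm_ring_1) ^ (\<Prod>i<n. lam i) \<in> ideal_pow n Q (m * (\<Prod>i<n. lam i))"
proof -
  define L where "L = (\<Prod>i<n. lam i)"
  have dvd_L: "lam i dvd L" if "i < n" for i unfolding L_def using that by (intro dvd_prodI) auto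
  define c where "c i = lookup b i * (L div lam i)" for i
  have "single b (1::'a) ^ L = (\<Prod>i<n. (mvar i ^ lam i) ^ c i)"
    unfolding c_def by (rule single_power_eq_prod_mvar_power[OF dvd_L b])
  moreover have "(\<Prod>i<n. (mvar i ^ lam i) ^ c i) \<in> ideal_pow n Q (\<Sum>i<n. c i)"
    using gens by (intro ideal_pow_prod[OF Q]) (auto intro: ideal_pow_power)
  moreover have "ideal_pow n Q (\<Sum>i<n. c i) \<subseteq> ideal_pow n Q (m * L)"
  proof (rule ideal_pow_antimono[OF Q])
    have "real (\<Sum>i<n. c i) = real L * lam_weight lam n b"
      unfolding lam_weight_def of_nat_sum sum_distrib_left
      using dvd_L pos by (intro sum.cong) (auto simp: c_def real_of_nat_div)
    also have "\<dots> \<ge> real L * real m" using weight by (intro mult_left_mono) simp_all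
    finally have "real (m * L) \<le> real (\<Sum>i<n. c i)" by (simp add: mult.commute)
    then show "m * L \<le> (\<Sum>i<n. c i)" by linarith
  qed
  ultimately show ?thesis unfolding L_def by (metis subsetD)
qed

lemma single_in_int_closure_ideal_pow:
  assumes pos: "\<forall>i<n. lam i > 0" and b: "keys b \<subseteq> {..<n}" and Q: "Q \<subseteq> polyR n"
    and gens: "\<And>i. i < n \<Longrightarrow> mvar i ^ lam i \<in> Q" and weight: "real m \<le> lam_weight lam n b"
  shows "single b (1::'a::comm_ring_1) \<in> int_closure n (ideal_pow n Q m)"
proof (rule int_closureI_power[OF ideal_pow_subset_polyR[OF Q] polyR_single[OF b]])
  show "(\<Prod>i<n. lam i) \<ge> 1" using pos by (simp add: Suc_le_eq prod_pos)
  show "single b (1::'a) ^ (\<Prod>i<n. lam i) \<in> ideal_pow n (ideal_pow n Q m) (\<Prod>i<n. lam i)"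
    using single_power_in_ideal_pow[OF pos b Q gens weight] ideal_pow_mult_subset_pow_pow[OF Q] by blast
qed

lemma single_in_I_ideal:
  assumes pos: "\<forall>i<n. lam i > 0" and b: "keys b \<subseteq> {..<n}" and weight: "1 \<le> lam_weight lam n b"
  shows "single b (1::'a::comm_ring_1) \<in> I_ideal n lam"
proof -
  have "single b (1::'a) \<in> int_closure n (ideal_pow n (J_ideal n lam) 1)"
    by (rule single_in_int_closure_ideal_pow[OF pos b ideal_subset_polyR[OF is_ideal_J_ideal]
          mvar_power_in_J_ideal]) (use weight in simp_all)
  then show ?thesis unfolding I_ideal_def ideal_pow_one[OF is_ideal_J_ideal] .
qed

section \<open>Normality as a decomposition property\<close>

definition splittable :: "(nat \<Rightarrow> nat) \<Rightarrow> nat \<Rightarrow> nat \<Rightarrow> (nat \<Rightarrow>\<^sub>0 nat) set" where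
  "splittable lam n m = {a. \<exists>bs. (\<forall>j<m. 1 \<le> lam_weight lam n (bs j))
     \<and> (\<forall>i. (\<Sum>j<m. lookup (bs j) i) \<le> lookup a i)}"

definition decomposition_property :: "nat \<Rightarrow> (nat \<Rightarrow> nat) \<Rightarrow> bool" where
  "decomposition_property n lam \<longleftrightarrow> (\<forall>m\<ge>1. \<forall>a. keys a \<subseteq> {..<n} \<longrightarrow>
     real m \<le> lam_weight lam n a \<longrightarrow> a \<in> splittable lam n m)"

lemma splittable_add:
  assumes "a \<in> splittable lam n m" shows "a + c \<in> splittable lam n m"
proof -
  obtain bs where bs: "\<forall>j<m. 1 \<le> lam_weight lam n (bs j)" "\<forall>i. (\<Sum>j<m. lookup (bs j) i) \<le> lookup a i"
    using assms unfolding splittable_def by blast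
  have "\<forall>i. (\<Sum>j<m. lookup (bs j) i) \<le> lookup (a + c) i"
    using bs(2) by (simp add: lookup_add add_increasing2)
  with bs(1) show ?thesis unfolding splittable_def by blast
qed

lemma splittable_zero: "splittable lam n 0 = UNIV"
  unfolding splittable_def by simp

lemma splittable_Suc:
  assumes a: "a \<in> splittable lam n m" and b: "1 \<le> lam_weight lam n b"
  shows "a + b \<in> splittable lam n (Suc m)"
proof -
  obtain bs where bs: "\<forall>j<m. 1 \<le> lam_weight lam n (bs j)" "\<forall>i. (\<Sum>j<m. lookup (bs j) i) \<le> lookup a i"
    using a unfolding splittable_def by blast
  have "\<forall>j<Suc m. 1 \<le> lam_weight lam n ((bs(m := b)) j)" using bs(1) b by (simp add: less_Suc_eq)
  moreover have "\<forall>i. (\<Sum>j<Suc m. lookup ((bs(m := b)) j) i) \<le> lookup (a + b) i"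
    using bs(2) by (simp add: lookup_add)
  ultimately show ?thesis unfolding splittable_def by blast
qed

lemma I_ideal_pow_subset_splittable:
  assumes pos: "\<forall>i<n. lam i > 0"
  shows "ideal_pow n (I_ideal n lam :: 'a::idom mpoly set) m \<subseteq> monomial_ideal n (splittable lam n m)"
  by (rule ideal_pow_subset_monomial_ideal[OF I_ideal_subset_weight[OF pos]])
    (simp_all add: splittable_add splittable_zero splittable_Suc)

lemma single_in_I_ideal_pow:
  assumes pos: "\<forall>i<n. lam i > 0" and a: "keys a \<subseteq> {..<n}" and split: "a \<in> splittable lam n m"
  shows "single a c \<in> ideal_pow n (I_ideal n lam :: 'a::comm_ring_1 mpoly set) m"
proof -
  obtain bs where bs: "\<forall>j<m. 1 \<le> lam_weight lam n (bs j)" "\<forall>i. (\<Sum>j<m. lookup (bs j) i) \<le> lookup a i"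
    using split unfolding splittable_def by blast
  define s where "s = (\<Sum>j<m. bs j)"
  have a_eq: "a = s + (a - s)"
    using bs(2) by (intro poly_mapping_eqI) (simp add: s_def lookup_add lookup_minus lookup_sum)
  have "keys (bs j) \<subseteq> {..<n}" if "j < m" for j
  proof
    fix z assume "z \<in> keys (bs j)"
    then have "0 < lookup (bs j) z" by (simp add: in_keys_iff)
    also have "lookup (bs j) z \<le> (\<Sum>j<m. lookup (bs j) z)" using that by (intro member_le_sum) auto
    also have "\<dots> \<le> lookup a z" using bs(2) by blast
    finally have "z \<in> keys a" by (simp add: in_keys_iff)
    with a show "z \<in> {..<n}" by blast
  qed
  then have "(\<Prod>j<m. single (bs j) (1::'a)) \<in> ideal_pow n (I_ideal n lam) m"
    using bs(1) pos by (intro ideal_pow_prod_lessThan single_in_I_ideal) auto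
  moreover have "keys (a - s) \<subseteq> keys a"
    by (auto simp: in_keys_iff lookup_minus)
  with a have "keys (a - s) \<subseteq> {..<n}" by blast
  ultimately have "(\<Prod>j<m. single (bs j) (1::'a)) * single (a - s) c \<in> ideal_pow n (I_ideal n lam) m"
    by (intro ideal_mult_right[OF is_ideal_ideal_pow[OF I_ideal_subset_polyR]] polyR_single)
  also have "(\<Prod>j<m. single (bs j) (1::'a)) * single (a - s) c = single (s + (a - s)) c"
    by (simp add: s_def prod_single_one mult_single)
  also have "\<dots> = single a c" by (simp only: a_eq[symmetric])
  finally show ?thesis .
qed

lemma normal_imp_decomposition_property:
  assumes pos: "\<forall>i<n. lam i > 0" and normal: "normal_ideal n (I_ideal n lam :: 'a::idom mpoly set)"
  shows "decomposition_property n lam"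
  unfolding decomposition_property_def
proof (intro allI impI)
  fix m a assume m: "1 \<le> m" and a: "keys a \<subseteq> {..<n}" and weight: "real m \<le> lam_weight lam n a"
  have "single a (1::'a) \<in> int_closure n (ideal_pow n (I_ideal n lam) m)"
    using pos a I_ideal_subset_polyR
    by (rule single_in_int_closure_ideal_pow[OF _ _ _ subsetD[OF J_ideal_subset_I_ideal] weight])
      (rule mvar_power_in_J_ideal)
  then have "single a (1::'a) \<in> ideal_pow n (I_ideal n lam) m"
    using normal m unfolding normal_ideal_def integrally_closed_def by simp
  then have "single a (1::'a) \<in> monomial_ideal n (splittable lam n m)"
    using I_ideal_pow_subset_splittable[OF pos] by blast
  then show "a \<in> splittable lam n m" by (simp add: monomial_ideal_def)
qed

lemma decomposition_property_imp_normal: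
  assumes pos: "\<forall>i<n. lam i > 0" and dp: "decomposition_property n lam"
  shows "normal_ideal n (I_ideal n lam :: 'a::idom mpoly set)"
  unfolding normal_ideal_def integrally_closed_def
proof (intro allI impI)
  fix m :: nat assume m: "1 \<le> m"
  define P where "P = ideal_pow n (I_ideal n lam :: 'a mpoly set) m"
  have "P \<subseteq> monomial_ideal n {x. real m * 1 \<le> lam_weight lam n x}"
    unfolding P_def by (rule ideal_pow_subset_weight[OF lam_weight_add lam_weight_nonneg
          I_ideal_subset_weight[OF pos] zero_le_one])
  then have "P \<subseteq> monomial_ideal n {x. real m \<le> lam_weight lam n x}" by simp
  then have closure_weight: "int_closure n P \<subseteq> monomial_ideal n {x. real m \<le> lam_weight lam n x}"
    by (rule int_closure_subset_weight[where w = "lam_weight lam n", OF lam_weight_add lam_weight_nonneg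
          _ of_nat_0_le_iff])
  have "int_closure n P \<subseteq> P"
  proof
    fix x assume x: "x \<in> int_closure n P"
    show "x \<in> P"
    proof (rule ideal_mem_if_terms_mem)
      show "is_ideal n P" unfolding P_def by (rule is_ideal_ideal_pow[OF I_ideal_subset_polyR])
      fix t assume t: "t \<in> keys x"
      have "keys t \<subseteq> {..<n}" "real m \<le> lam_weight lam n t"
        using t x closure_weight unfolding monomial_ideal_def polyR_def by blast+
      then have "t \<in> splittable lam n m" using dp m unfolding decomposition_property_def by blast
      then show "single t (lookup x t) \<in> P"
        unfolding P_def by (rule single_in_I_ideal_pow[OF pos \<open>keys t \<subseteq> {..<n}\<close>])
    qed
  qed
  moreover have "P \<subseteq> int_closure n P"
    unfolding P_def by (rule ideal_subset_int_closure[OF ideal_pow_subset_polyR[OF I_ideal_subset_polyR]])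
  ultimately show "int_closure n (ideal_pow n (I_ideal n lam) m) = ideal_pow n (I_ideal n lam :: 'a mpoly set) m"
    unfolding P_def by blast
qed

lemma normal_I_ideal_iff_decomposition_property:
  "\<forall>i<n. lam i > 0 \<Longrightarrow> normal_ideal n (I_ideal n lam :: 'a::idom mpoly set) \<longleftrightarrow> decomposition_property n lam"
  using normal_imp_decomposition_property decomposition_property_imp_normal by blast

section \<open>Raising the last exponent\<close>

text \<open>When \<open>\<lambda>\<^sub>i\<close> divides \<open>l\<close> for \<open>i < k\<close>, \<open>deficit l lam k m a\<close> is \<open>l\<close> times the amount
  \<open>(m - \<Sum>\<^sub>i\<^sub><\<^sub>k a\<^sub>i / \<lambda>\<^sub>i)\<^sup>+\<close> by which the first \<open>k\<close> coordinates of \<open>a\<close> fall short of weight \<open>m\<close>.\<close>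

definition deficit :: "nat \<Rightarrow> (nat \<Rightarrow> nat) \<Rightarrow> nat \<Rightarrow> nat \<Rightarrow> (nat \<Rightarrow>\<^sub>0 nat) \<Rightarrow> nat" where
  "deficit l lam k m a = m * l - (\<Sum>i<k. lookup a i * (l div lam i))"

lemma deficit_update_last [simp]: "deficit l lam k m (Poly_Mapping.update k v a) = deficit l lam k m a"
  unfolding deficit_def by (simp add: lookup_update)

lemma deficit_fun_upd_last [simp]: "deficit l (lam(k := c)) k m a = deficit l lam k m a"
  unfolding deficit_def by simp

lemma deficit_sum_le:
  assumes "\<forall>i. (\<Sum>j<m. lookup (bs j) i) \<le> lookup a i"
  shows "deficit l lam k m a \<le> (\<Sum>j<m. deficit l lam k 1 (bs j))"
proof -
  define N where "N b = (\<Sum>i<k. lookup b i * (l div lam i))" for b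
  have "(\<Sum>j<m. N (bs j)) = (\<Sum>i<k. (\<Sum>j<m. lookup (bs j) i) * (l div lam i))"
    unfolding N_def by (simp add: sum.swap[of _ "{..<m}"] sum_distrib_right)
  also have "\<dots> \<le> N a"
    unfolding N_def using assms by (intro sum_mono mult_right_mono) auto
  finally have "(\<Sum>j<m. N (bs j)) \<le> N a" .
  moreover have "m * l \<le> (\<Sum>j<m. (l - N (bs j)) + N (bs j))"
    using sum_mono[of "{..<m}" "\<lambda>_. l" "\<lambda>j. (l - N (bs j)) + N (bs j)"] by simp
  ultimately show ?thesis
    unfolding deficit_def N_def[symmetric] sum.distrib by simp
qed

lemma mediant_le_iff:
  fixes d t l \<mu> :: real
  assumes "l > 0" "\<mu> > 0"
  shows "d / l \<le> t / \<mu> \<longleftrightarrow> d / l \<le> (t + d) / (\<mu> + l)"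
  using assms by (simp add: field_simps)

lemma lam_weight_Suc_ge_iff:
  assumes dvd: "\<forall>i<k. lam i dvd l" and l: "l > 0" and lam_k: "lam k > 0"
  shows "real m \<le> lam_weight lam (Suc k) a
    \<longleftrightarrow> real (deficit l lam k m a) / real l \<le> real (lookup a k) / real (lam k)"
proof -
  define N where "N = (\<Sum>i<k. lookup a i * (l div lam i))"
  have "real N / real l = (\<Sum>i<k. real (lookup a i) / real (lam i))"
    unfolding N_def of_nat_sum sum_divide_distrib
    using dvd l by (intro sum.cong) (auto simp: real_of_nat_div)
  then have weight: "lam_weight lam (Suc k) a = real N / real l + real (lookup a k) / real (lam k)"
    by (simp add: lam_weight_def)
  show ?thesis
  proof (cases "m * l \<le> N")
    case True
    then have "real m \<le> real N / real l" using l by (simp add: le_divide_eq flip: of_nat_mult)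
    then show ?thesis using True by (simp add: weight deficit_def N_def[symmetric] add_increasing2)
  next
    case False
    then have "real (deficit l lam k m a) / real l = real m - real N / real l"
      using l by (simp add: deficit_def N_def[symmetric] of_nat_diff diff_divide_distrib)
    then show ?thesis unfolding weight by linarith
  qed
qed

lemma keys_update_subset: "keys a \<subseteq> {..<Suc k} \<Longrightarrow> keys (Poly_Mapping.update k v a) \<subseteq> {..<Suc k}"
  by (auto simp: keys_update)

lemma splittable_update_last:
  assumes weight: "\<forall>j<m. 1 \<le> lam_weight lam n (Poly_Mapping.update k (v j) (bs j))"
    and others: "\<And>i. i \<noteq> k \<Longrightarrow> (\<Sum>j<m. lookup (bs j) i) \<le> lookup a i"
    and last: "(\<Sum>j<m. v j) \<le> lookup a k"
  shows "a \<in> splittable lam n m"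
proof -
  define bs' where "bs' j = Poly_Mapping.update k (v j) (bs j)" for j
  have "\<forall>i. (\<Sum>j<m. lookup (bs' j) i) \<le> lookup a i"
  proof
    fix i show "(\<Sum>j<m. lookup (bs' j) i) \<le> lookup a i"
      using others[of i] last by (cases "i = k") (simp_all add: bs'_def lookup_update)
  qed
  moreover have "\<forall>j<m. 1 \<le> lam_weight lam n (bs' j)" using weight by (simp add: bs'_def)
  ultimately show ?thesis unfolding splittable_def by blast
qed

text \<open>\<open>t0 = \<lceil>\<mu> \<delta> / l\<rceil>\<close> is the least exponent making up the deficit \<open>\<delta>\<close>; minimality and
  \<open>l \<le> \<mu>\<close> give the last property.\<close>

lemma least_last_exponent:
  fixes \<delta> t l \<mu> :: nat
  assumes l: "l > 0" and l_le: "l \<le> \<mu>" and le: "real \<delta> / real l \<le> real t / real (\<mu> + l)"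
  obtains t0 where "real \<delta> / real l \<le> real t0 / real \<mu>" "t0 + \<delta> \<le> t"
    "\<And>X S. \<mu> * X \<le> l * S \<Longrightarrow> S \<le> t0 \<Longrightarrow> X \<le> \<delta>"
proof
  define t0 where "t0 = nat \<lceil>real \<mu> * real \<delta> / real l\<rceil>"
  have t0_ge: "real \<mu> * real \<delta> / real l \<le> real t0" unfolding t0_def by linarith
  have t0_less: "real t0 < real \<mu> * real \<delta> / real l + 1"
    unfolding t0_def by (simp add: of_nat_nat ceiling_less_iff) linarith
  show "real \<delta> / real l \<le> real t0 / real \<mu>"
    using t0_ge l l_le by (simp add: field_simps)
  have "real \<delta> * (real \<mu> + real l) \<le> real t * real l"
    using le l by (simp add: field_simps)
  then have "real \<mu> * real \<delta> / real l \<le> real t - real \<delta>"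
    using l by (simp add: field_simps)
  then have "\<lceil>real \<mu> * real \<delta> / real l\<rceil> \<le> int t - int \<delta>"
    by (simp add: ceiling_le_iff)
  moreover have "int t0 = \<lceil>real \<mu> * real \<delta> / real l\<rceil>"
  proof -
    have "0 \<le> real \<mu> * real \<delta> / real l" by simp
    then have "0 \<le> \<lceil>real \<mu> * real \<delta> / real l\<rceil>" by (metis ceiling_mono ceiling_zero)
    then show ?thesis unfolding t0_def by simp
  qed
  ultimately show "t0 + \<delta> \<le> t" by linarith
  fix X S assume XS: "\<mu> * X \<le> l * S" and S: "S \<le> t0"
  have "real \<mu> * real X \<le> real l * real t0"
    using XS S l by (metis mult_le_mono2 of_nat_le_iff of_nat_mult order.trans)
  also have "\<dots> < real \<mu> * real \<delta> + real l" using t0_less l by (simp add: field_simps)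
  also have "\<dots> \<le> real \<mu> * (real \<delta> + 1)" using l_le by (simp add: algebra_simps)
  finally have "real \<mu> * real X < real \<mu> * (real \<delta> + 1)" .
  then have "real X < real \<delta> + 1" using l l_le by (simp add: mult_less_cancel_left_pos)
  then show "X \<le> \<delta>" by linarith
qed

context
  fixes k l :: nat and lam :: "nat \<Rightarrow> nat"
  assumes lam_dvd: "\<forall>i<k. lam i dvd l" and l_pos: "l > 0" and lam_pos: "lam k > 0"
begin

lemma lam_weight_Suc_ge_iff_raised:
  "real m \<le> lam_weight (lam(k := lam k + l)) (Suc k) a
    \<longleftrightarrow> real (deficit l lam k m a) / real l \<le> real (lookup a k) / (real (lam k) + real l)"
  using lam_weight_Suc_ge_iff[of k "lam(k := lam k + l)" l m a] lam_dvd l_pos by simp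

lemma mediant_le_iff_last:
  "d / real l \<le> t / real (lam k) \<longleftrightarrow> d / real l \<le> (t + d) / (real (lam k) + real l)"
  using l_pos lam_pos by (intro mediant_le_iff) auto

lemma weight_raise_last:
  assumes "real m \<le> lam_weight lam (Suc k) b"
  shows "real m \<le> lam_weight (lam(k := lam k + l)) (Suc k)
    (Poly_Mapping.update k (lookup b k + deficit l lam k m b) b)"
proof -
  let ?d = "deficit l lam k m b"
  have "real ?d / real l \<le> real (lookup b k) / real (lam k)"
    using assms by (simp add: lam_weight_Suc_ge_iff[OF lam_dvd l_pos lam_pos])
  then have "real ?d / real l \<le> (real (lookup b k) + real ?d) / (real (lam k) + real l)"
    by (simp only: mediant_le_iff_last)
  then show ?thesis by (simp add: lam_weight_Suc_ge_iff_raised lookup_update)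
qed

lemma weight_lower_last:
  assumes "real m \<le> lam_weight (lam(k := lam k + l)) (Suc k) b"
  shows "deficit l lam k m b \<le> lookup b k"
    and "real m \<le> lam_weight lam (Suc k) (Poly_Mapping.update k (lookup b k - deficit l lam k m b) b)"
proof -
  let ?d = "deficit l lam k m b"
  have le: "real ?d / real l \<le> real (lookup b k) / (real (lam k) + real l)"
    using assms by (simp add: lam_weight_Suc_ge_iff_raised)
  also have "\<dots> \<le> real (lookup b k) / real l"
    using l_pos by (intro divide_left_mono) auto
  finally show d_le: "?d \<le> lookup b k"
    using l_pos by (simp add: divide_le_cancel)
  have "real ?d / real l \<le> (real (lookup b k - ?d) + real ?d) / (real (lam k) + real l)"
    using le d_le by simp
  then have "real ?d / real l \<le> real (lookup b k - ?d) / real (lam k)"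
    by (simp only: mediant_le_iff_last)
  then show "real m \<le> lam_weight lam (Suc k) (Poly_Mapping.update k (lookup b k - ?d) b)"
    by (simp add: lam_weight_Suc_ge_iff[OF lam_dvd l_pos lam_pos] lookup_update)
qed

lemma deficit_le_last:
  assumes "real m \<le> lam_weight lam (Suc k) b"
  shows "lam k * deficit l lam k m b \<le> l * lookup b k"
proof -
  have "real (deficit l lam k m b) / real l \<le> real (lookup b k) / real (lam k)"
    using assms by (simp add: lam_weight_Suc_ge_iff[OF lam_dvd l_pos lam_pos])
  then show ?thesis
    using l_pos lam_pos by (simp add: divide_le_eq le_divide_eq mult.commute flip: of_nat_mult)
qed

lemma decomposition_property_lower:
  assumes dp: "decomposition_property (Suc k) (lam(k := lam k + l))"
  shows "decomposition_property (Suc k) lam"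
  unfolding decomposition_property_def
proof (intro allI impI)
  fix m a assume m: "1 \<le> m" and a: "keys a \<subseteq> {..<Suc k}"
    and weight: "real m \<le> lam_weight lam (Suc k) a"
  define \<delta> where "\<delta> = deficit l lam k m a"
  define a' where "a' = Poly_Mapping.update k (lookup a k + \<delta>) a"
  have "a' \<in> splittable (lam(k := lam k + l)) (Suc k) m"
    unfolding a'_def \<delta>_def
    by (rule dp[unfolded decomposition_property_def, rule_format,
          OF m keys_update_subset[OF a] weight_raise_last[OF weight]])
  then obtain bs where bs_weight: "\<forall>j<m. 1 \<le> lam_weight (lam(k := lam k + l)) (Suc k) (bs j)"
    and bs_sum: "\<forall>i. (\<Sum>j<m. lookup (bs j) i) \<le> lookup a' i"
    unfolding splittable_def by blast
  define d where "d j = deficit l lam k 1 (bs j)" for j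
  show "a \<in> splittable lam (Suc k) m"
  proof (rule splittable_update_last[where v = "\<lambda>j. lookup (bs j) k - d j"])
    show "\<forall>j<m. 1 \<le> lam_weight lam (Suc k) (Poly_Mapping.update k (lookup (bs j) k - d j) (bs j))"
      using weight_lower_last(2)[of 1] bs_weight unfolding d_def by simp
    show "(\<Sum>j<m. lookup (bs j) i) \<le> lookup a i" if "i \<noteq> k" for i
      using bs_sum[rule_format, of i] that by (simp add: a'_def lookup_update)
    have "\<delta> \<le> (\<Sum>j<m. d j)"
      using deficit_sum_le[OF bs_sum, where l = l and lam = lam and k = k]
      unfolding \<delta>_def d_def a'_def by simp
    moreover have "(\<Sum>j<m. lookup (bs j) k - d j) = (\<Sum>j<m. lookup (bs j) k) - (\<Sum>j<m. d j)"
      using weight_lower_last(1)[of 1] bs_weight unfolding d_def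
      by (intro sum_subtractf_nat) simp
    ultimately show "(\<Sum>j<m. lookup (bs j) k - d j) \<le> lookup a k"
      using bs_sum[rule_format, of k] by (simp add: a'_def lookup_update)
  qed
qed

lemma decomposition_property_raise:
  assumes l_le: "l \<le> lam k" and dp: "decomposition_property (Suc k) lam"
  shows "decomposition_property (Suc k) (lam(k := lam k + l))"
  unfolding decomposition_property_def
proof (intro allI impI)
  fix m a assume m: "1 \<le> m" and a: "keys a \<subseteq> {..<Suc k}"
    and weight: "real m \<le> lam_weight (lam(k := lam k + l)) (Suc k) a"
  define \<delta> where "\<delta> = deficit l lam k m a"
  have "real \<delta> / real l \<le> real (lookup a k) / real (lam k + l)"
    using weight unfolding \<delta>_def lam_weight_Suc_ge_iff_raised by simp
  then obtain t0 where t0_weight: "real \<delta> / real l \<le> real t0 / real (lam k)"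
    and t0_le: "t0 + \<delta> \<le> lookup a k"
    and t0_min: "\<And>X S. lam k * X \<le> l * S \<Longrightarrow> S \<le> t0 \<Longrightarrow> X \<le> \<delta>"
    using least_last_exponent[OF l_pos l_le] by blast
  define a0 where "a0 = Poly_Mapping.update k t0 a"
  have "real m \<le> lam_weight lam (Suc k) a0"
    using t0_weight unfolding a0_def \<delta>_def
    by (simp add: lam_weight_Suc_ge_iff[OF lam_dvd l_pos lam_pos] lookup_update)
  then have "a0 \<in> splittable lam (Suc k) m"
    unfolding a0_def
    by (rule dp[unfolded decomposition_property_def, rule_format, OF m keys_update_subset[OF a]])
  then obtain bs where bs_weight: "\<forall>j<m. 1 \<le> lam_weight lam (Suc k) (bs j)"
    and bs_sum: "\<forall>i. (\<Sum>j<m. lookup (bs j) i) \<le> lookup a0 i"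
    unfolding splittable_def by blast
  define d where "d j = deficit l lam k 1 (bs j)" for j
  show "a \<in> splittable (lam(k := lam k + l)) (Suc k) m"
  proof (rule splittable_update_last[where v = "\<lambda>j. lookup (bs j) k + d j"])
    show "\<forall>j<m. 1 \<le> lam_weight (lam(k := lam k + l)) (Suc k)
        (Poly_Mapping.update k (lookup (bs j) k + d j) (bs j))"
      using weight_raise_last[of 1] bs_weight unfolding d_def by simp
    show "(\<Sum>j<m. lookup (bs j) i) \<le> lookup a i" if "i \<noteq> k" for i
      using bs_sum[rule_format, of i] that by (simp add: a0_def lookup_update)
    have "(\<Sum>j<m. d j) \<le> \<delta>"
    proof (rule t0_min)
      show "lam k * (\<Sum>j<m. d j) \<le> l * (\<Sum>j<m. lookup (bs j) k)"
        unfolding sum_distrib_left using deficit_le_last[of 1] bs_weight unfolding d_def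
        by (intro sum_mono) simp
      show "(\<Sum>j<m. lookup (bs j) k) \<le> t0"
        using bs_sum[rule_format, of k] by (simp add: a0_def lookup_update)
    qed
    then show "(\<Sum>j<m. lookup (bs j) k + d j) \<le> lookup a k"
      using bs_sum[rule_format, of k] t0_le by (simp add: a0_def lookup_update sum.distrib)
  qed
qed

end

theorem theorem5p1:
  fixes lam :: "nat \<Rightarrow> nat" and n :: nat
  assumes "n \<ge> 2"
    and "\<forall>i<n. lam i > 0"
  defines "l \<equiv> Lcm (lam ` {..<n - 1})"
  defines "lam' \<equiv> lam(n - 1 := lam (n - 1) + l)"
  shows "(normal_ideal n (I_ideal n lam' :: 'a::field mpoly set) \<longrightarrow> normal_ideal n (I_ideal n lam :: 'a mpoly set))
       \<and> (lam (n - 1) \<ge> l \<and> normal_ideal n (I_ideal n lam :: 'a mpoly set) \<longrightarrow> normal_ideal n (I_ideal n lam' :: 'a mpoly set))"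
proof -
  obtain k where n: "n = Suc k" using assms(1) by (cases n) auto
  have lam_pos: "\<forall>i<Suc k. lam i > 0" using assms(2) n by simp
  have lam_dvd: "\<forall>i<k. lam i dvd l" unfolding l_def n by (auto intro: dvd_Lcm)
  have "Lcm (lam ` {..<k}) \<noteq> 0" using lam_pos by (auto simp: Lcm_0_iff less_Suc_eq)
  then have l_pos: "l > 0" unfolding l_def n by (metis diff_Suc_1 gr0I)
  have lam': "lam' = lam(k := lam k + l)" unfolding lam'_def n by simp
  have lam'_pos: "\<forall>i<Suc k. lam' i > 0" using lam_pos unfolding lam' by simp
  have "normal_ideal n (I_ideal n lam :: 'a mpoly set) \<longleftrightarrow> decomposition_property (Suc k) lam"
    using normal_I_ideal_iff_decomposition_property[OF lam_pos] n by simp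
  moreover have "normal_ideal n (I_ideal n lam' :: 'a mpoly set) \<longleftrightarrow> decomposition_property (Suc k) lam'"
    using normal_I_ideal_iff_decomposition_property[OF lam'_pos] n by simp
  ultimately show ?thesis
    using decomposition_property_lower[OF lam_dvd l_pos] decomposition_property_raise[OF lam_dvd l_pos]
      lam_pos n unfolding lam' by auto
qed

end
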